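(* Let $\bar q=(q^2-1)/2$, and define $f$ on residues $t$ modulo $q^2-1$ with $t\not\equiv\bar q$ by the condition $\xi^{-t}+\xi^{f(t)}=-1$; then $f$ is a bijection from the residues $\not\equiv\bar q$ onto themselves. Let $j$ be an integer with $1\le j\le q$. For $t\in\{0,1,\dots,q-2\}$ put $e(t)=f^{-1}(t(q+1)-j)$, a residue modulo $q^2-1$, hence a well-defined residue modulo $q+1$. Then: - the $q-1$ residues $e(0),\dots,e(q-2)$ modulo $q+1$ are pairwise distinct; - none of them is congruent to $0$ or to $j$ modulo $q+1$.
   Context: Let $q$ be an odd prime power, $F=\mathrm{GF}(q^2)$, and let $\xi$ be a fixed primitive element of $F$ (so that $\xi^{\bar q}=-1$). *)

theory Defs
  imports "HOL-Computational_Algebra.Primes"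
begin

definition odd_prime_power :: "nat \<Rightarrow> bool" where
  "odd_prime_power q \<longleftrightarrow> (\<exists>p k. prime p \<and> odd p \<and> k > 0 \<and> q = p ^ k)"

definition primitive_elem :: "'a::field \<Rightarrow> bool" where
  "primitive_elem \<xi> \<longleftrightarrow> \<xi> \<noteq> 0 \<and> (\<forall>x. x \<noteq> 0 \<longrightarrow> (\<exists>n::nat. \<xi> ^ n = x))"

definition qbar :: "nat \<Rightarrow> int" where
  "qbar q = (int q ^ 2 - 1) div 2"

definition resid_dom :: "nat \<Rightarrow> int set" where
  "resid_dom q = {t. 0 \<le> t \<and> t < int q ^ 2 - 1 \<and> t \<noteq> qbar q}"

definition f_map :: "nat \<Rightarrow> 'a::field \<Rightarrow> int \<Rightarrow> int" where
  "f_map q \<xi> t = (THE s. 0 \<le> s \<and> s < int q ^ 2 - 1 \<and> \<xi> powi (-t) + \<xi> powi s = -1)"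

definition e_map :: "nat \<Rightarrow> 'a::field \<Rightarrow> int \<Rightarrow> int \<Rightarrow> int" where
  "e_map q \<xi> j t = the_inv_into (resid_dom q) (f_map q \<xi>) ((t * (int q + 1) - j) mod (int q ^ 2 - 1))"

end

theory Submission
  imports Defs "HOL-Number_Theory.Residues"
begin

text \<open>Since \<open>\<xi>\<close> is primitive, \<open>\<xi> powi t = -1\<close> exactly for \<open>t \<equiv> qbar\<close>; so for \<open>t \<not>\<equiv> qbar\<close> the
  element \<open>-1 - \<xi> powi (-t)\<close> is a nonzero power \<open>\<xi> powi s\<close> with \<open>s \<not>\<equiv> qbar\<close>, and \<open>f\<close> is an injective,
  hence bijective, self-map of the finite set of such residues.

  The powers \<open>\<xi> powi a\<close> with \<open>q + 1\<close> dividing \<open>a\<close> form the subfield \<open>GF(q)\<close>, the fixed field of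
  the Frobenius \<open>x \<mapsto> x ^ q\<close>; in particular \<open>\<xi> powi (t * (q + 1)) \<in> GF(q)\<close> while
  \<open>\<xi> powi (- j) \<notin> GF(q)\<close> for \<open>1 \<le> j \<le> q\<close>. By definition of \<open>e\<close>,
  \<open>\<xi> powi (- e t) = -1 - \<xi> powi (t * (q + 1)) * \<xi> powi (- j)\<close>. A coincidence \<open>e t1 \<equiv> e t2\<close>,
  \<open>e t \<equiv> 0\<close> or \<open>e t \<equiv> j\<close> modulo \<open>q + 1\<close> puts one more power of \<open>\<xi>\<close> into \<open>GF(q)\<close> and turns this
  identity into a \<open>GF(q)\<close>-linear relation between \<open>1\<close> and \<open>\<xi> powi (- j)\<close>, which must be trivial;
  triviality forces \<open>t1 = t2\<close> or a contradiction.\<close>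

lemma power_card_eq_self:
  fixes x :: "'a::{field,finite}"
  shows "x ^ card (UNIV :: 'a set) = x"
proof (cases "x = 0")
  case True
  then show ?thesis
    using finite_UNIV_card_ge_0[where ?'a = 'a] by simp
next
  case False
  \<comment> \<open>Multiplication by x permutes the nonzero elements.\<close>
  have "(\<Prod>y\<in>UNIV-{0}. x * y) = (\<Prod>y\<in>UNIV-{0}. y)"
    by (rule prod.reindex_bij_witness[of _ "\<lambda>y. y / x" "\<lambda>y. x * y"]) (use False in auto)
  then have "x ^ (card (UNIV :: 'a set) - 1) * \<Prod>(UNIV-{0}) = \<Prod>(UNIV-{0::'a})"
    by (simp add: prod.distrib card_Diff_singleton)
  then have "x ^ (card (UNIV :: 'a set) - 1) = 1"
    by simp
  moreover have "card (UNIV :: 'a set) = Suc (card (UNIV :: 'a set) - 1)"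
    using finite_UNIV_card_ge_0[where ?'a = 'a] by simp
  ultimately show ?thesis
    by (metis power_Suc2 mult_1)
qed

lemma power_eq_power_mod:
  fixes x :: "'a::monoid_mult"
  assumes "x ^ r = 1"
  shows "x ^ n = x ^ (n mod r)"
proof -
  have "x ^ n = x ^ (r * (n div r)) * x ^ (n mod r)"
    by (simp only: power_add[symmetric] mult_div_mod_eq)
  also have "x ^ (r * (n div r)) = 1"
    by (simp only: power_mult assms power_one)
  finally show ?thesis
    by simp
qed

lemma primitive_elem_power_eq_one_imp_le:
  fixes \<xi> :: "'a::{field,finite}"
  assumes "primitive_elem \<xi>" and "\<xi> ^ r = 1" and "r > 0"
  shows "card (UNIV :: 'a set) - 1 \<le> r"
proof -
  have "UNIV - {0} \<subseteq> (\<lambda>m. \<xi> ^ m) ` {..<r}"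
  proof
    fix x :: 'a
    assume "x \<in> UNIV - {0}"
    then obtain m where "\<xi> ^ m = x"
      using assms(1) by (auto simp: primitive_elem_def)
    then have "x = \<xi> ^ (m mod r)"
      using power_eq_power_mod[OF assms(2)] by simp
    then show "x \<in> (\<lambda>m. \<xi> ^ m) ` {..<r}"
      using \<open>r > 0\<close> by simp
  qed
  then have "card (UNIV - {0::'a}) \<le> card ((\<lambda>m. \<xi> ^ m) ` {..<r})"
    by (intro card_mono) auto
  also have "\<dots> \<le> r"
    using card_image_le[of "{..<r}" "\<lambda>m. \<xi> ^ m"] by simp
  finally show ?thesis
    by (simp add: card_Diff_singleton)
qed

lemma primitive_elem_power_eq_one_iff:
  fixes \<xi> :: "'a::{field,finite}"
  assumes "primitive_elem \<xi>"
  shows "\<xi> ^ n = 1 \<longleftrightarrow> (card (UNIV :: 'a set) - 1) dvd n"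
proof -
  let ?N = "card (UNIV :: 'a set) - 1"
  have "card {0, 1::'a} \<le> card (UNIV :: 'a set)"
    by (rule card_mono) auto
  then have N_pos: "?N > 0"
    by simp
  have "\<xi> \<noteq> 0"
    using assms by (simp add: primitive_elem_def)
  moreover have "\<xi> * \<xi> ^ ?N = \<xi>"
    using power_card_eq_self[of \<xi>] N_pos by (simp flip: power_Suc)
  ultimately have \<xi>_N: "\<xi> ^ ?N = 1"
    by simp
  show ?thesis
  proof
    assume "\<xi> ^ n = 1"
    then have "\<xi> ^ (n mod ?N) = 1"
      using power_eq_power_mod[OF \<xi>_N] by simp
    then show "?N dvd n"
      using primitive_elem_power_eq_one_imp_le[OF assms, of "n mod ?N"] N_pos
      by (metis dvd_eq_mod_eq_0 leD mod_less_divisor neq0_conv)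
  next
    assume "?N dvd n"
    then obtain k where "n = ?N * k" ..
    then show "\<xi> ^ n = 1"
      by (simp only: power_mult \<xi>_N power_one)
  qed
qed

lemma primitive_elem_power_int_eq_one_iff:
  fixes \<xi> :: "'a::{field,finite}"
  assumes "primitive_elem \<xi>"
  shows "\<xi> powi a = 1 \<longleftrightarrow> int (card (UNIV :: 'a set) - 1) dvd a"
proof (cases a rule: int_cases2)
  case (nonneg n)
  then show ?thesis
    using primitive_elem_power_eq_one_iff[OF assms] by simp
next
  case (nonpos n)
  then show ?thesis
    using primitive_elem_power_eq_one_iff[OF assms] by (simp add: power_int_minus)
qed

lemma primitive_elem_power_int_eq_iff:
  fixes \<xi> :: "'a::{field,finite}"
  assumes "primitive_elem \<xi>"
  shows "\<xi> powi a = \<xi> powi b \<longleftrightarrow>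
    a mod int (card (UNIV :: 'a set) - 1) = b mod int (card (UNIV :: 'a set) - 1)"
proof -
  have "\<xi> \<noteq> 0"
    using assms by (simp add: primitive_elem_def)
  then have "\<xi> powi a = \<xi> powi b \<longleftrightarrow> \<xi> powi (a - b) = 1"
    by (simp add: power_int_diff)
  then show ?thesis
    by (simp add: primitive_elem_power_int_eq_one_iff[OF assms] mod_eq_dvd_iff)
qed

lemma primitive_elem_ex_power_int:
  fixes \<xi> :: "'a::{field,finite}"
  assumes "primitive_elem \<xi>" and "x \<noteq> 0"
  obtains s where "0 \<le> s" "s < int (card (UNIV :: 'a set) - 1)" "\<xi> powi s = x"
proof -
  let ?N = "int (card (UNIV :: 'a set) - 1)"
  obtain n where "\<xi> ^ n = x"
    using assms by (auto simp: primitive_elem_def)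
  moreover have "\<xi> powi (int n mod ?N) = \<xi> powi int n"
    by (simp only: primitive_elem_power_int_eq_iff[OF assms(1)] mod_mod_trivial)
  moreover have "?N > 0"
    using card_mono[of "UNIV :: 'a set" "{0, 1}"] by simp
  ultimately show ?thesis
    using that[of "int n mod ?N"] by simp
qed

lemma CHAR_eq_of_card_eq_prime_power:
  assumes "prime p" and "card (UNIV :: 'a::{field,finite} set) = p ^ m"
  shows "CHAR('a) = p"
proof -
  have "prime CHAR('a)"
    by (intro prime_CHAR_semidom finite_imp_CHAR_pos) simp
  moreover have "CHAR('a) dvd p ^ m"
    using CHAR_dvd_CARD[where 'a = 'a] assms(2) by simp
  ultimately show ?thesis
    using assms(1) prime_dvd_power primes_dvd_imp_eq by blast
qed

lemma additive_power_fixed_lin_indep: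
  fixes u v b :: "'a::field"
  assumes additive: "\<And>x y :: 'a. (x + y) ^ n = x ^ n + y ^ n"
    and "u ^ n = u" and "v ^ n = v" and "b ^ n \<noteq> b" and "u + v * b = 0"
  shows "u = 0 \<and> v = 0"
proof -
  have "0 ^ n = (0::'a)"
    using additive[of 0 0] by (metis add_0 add_cancel_left_right)
  then have minus: "(- u) ^ n = - (u ^ n)"
    using additive[of u "- u"] by (metis add.commute add.right_inverse eq_neg_iff_add_eq_0)
  have "v = 0"
  proof (rule ccontr)
    assume "v \<noteq> 0"
    then have b: "b = (- u) / v"
      using assms(5) by (simp add: field_simps eq_neg_iff_add_eq_0 add.commute)
    then have "b ^ n = (- u) ^ n / v ^ n"
      by (simp only: power_divide)
    also have "\<dots> = b"
      using minus assms(2,3) b by simp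
    finally show False
      using assms(4) by contradiction
  qed
  with assms(5) show ?thesis
    by simp
qed

locale primitive_GF_q2 =
  fixes \<xi> :: "'a::{field,finite}" and q :: nat
  assumes odd_prime_power_q: "odd_prime_power q"
    and card_eq: "card (UNIV :: 'a set) = q ^ 2"
    and primitive: "primitive_elem \<xi>"
begin

abbreviation N :: int where
  "N \<equiv> int q ^ 2 - 1"

lemma odd_q: "odd q" and q_ge_3: "q \<ge> 3"
proof -
  obtain p k where p: "prime p" "odd p" and "k > 0" and q: "q = p ^ k"
    using odd_prime_power_q by (auto simp: odd_prime_power_def)
  then show "odd q"
    by simp
  have "p \<ge> 3"
    using p prime_ge_2_nat[of p] by (cases "p = 2") auto
  then show "q \<ge> 3"
    using \<open>k > 0\<close> q self_le_power[of p k] by simp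
qed

lemma N_eq_card: "N = int (card (UNIV :: 'a set) - 1)"
  using card_eq q_ge_3 by (simp add: of_nat_diff)

lemma N_factor: "N = (int q + 1) * (int q - 1)"
  by (simp add: algebra_simps power2_eq_square)

lemma N_pos: "N > 0"
  using q_ge_3 N_factor by simp

lemma xi_nonzero: "\<xi> \<noteq> 0"
  using primitive by (simp add: primitive_elem_def)

lemma power_int_eq_iff: "\<xi> powi a = \<xi> powi b \<longleftrightarrow> a mod N = b mod N"
  using primitive_elem_power_int_eq_iff[OF primitive] by (simp add: N_eq_card)

lemma power_int_inj:
  assumes "0 \<le> a" "a < N" "0 \<le> b" "b < N"
  shows "\<xi> powi a = \<xi> powi b \<longleftrightarrow> a = b"
  using assms by (simp add: power_int_eq_iff)

lemma ex1_power_int: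
  assumes "x \<noteq> 0"
  shows "\<exists>!s. 0 \<le> s \<and> s < N \<and> \<xi> powi s = x"
  using primitive_elem_ex_power_int[OF primitive assms] power_int_inj unfolding N_eq_card
  by metis

lemma two_qbar: "2 * qbar q = N"
  using odd_q by (auto elim!: oddE simp: qbar_def power2_eq_square algebra_simps)

lemma dvd_qbar: "(int q + 1) dvd qbar q"
proof -
  obtain m where "q = 2 * m + 1"
    using odd_q by (auto elim: oddE)
  then have "qbar q = (int q + 1) * int m"
    by (simp add: qbar_def power2_eq_square algebra_simps)
  then show ?thesis
    by simp
qed

lemma power_int_qbar: "\<xi> powi qbar q = -1"
proof -
  let ?y = "\<xi> powi qbar q"
  have "?y * ?y = \<xi> powi N"
    using xi_nonzero two_qbar by (simp flip: power_int_add)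
  also have "\<dots> = 1"
    using power_int_eq_iff[of N 0] by simp
  finally have "(?y - 1) * (?y + 1) = 0"
    by (simp add: algebra_simps)
  moreover have "?y \<noteq> 1"
    using power_int_inj[of "qbar q" 0] two_qbar N_pos by simp
  ultimately show ?thesis
    by (simp add: eq_neg_iff_add_eq_0)
qed

lemma mem_resid_dom_iff: "t \<in> resid_dom q \<longleftrightarrow> 0 \<le> t \<and> t < N \<and> \<xi> powi t \<noteq> -1"
  using power_int_inj[of t "qbar q"] power_int_qbar two_qbar N_pos by (auto simp: resid_dom_def)

lemma f_map_mem_and_eq:
  assumes "t \<in> resid_dom q"
  shows "f_map q \<xi> t \<in> resid_dom q \<and> \<xi> powi (- t) + \<xi> powi (f_map q \<xi> t) = -1"
proof -
  have "\<xi> powi t \<noteq> -1"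
    using assms by (simp add: mem_resid_dom_iff)
  then have "inverse (\<xi> powi t) \<noteq> -1"
    by (metis inverse_minus_eq inverse_1 inverse_inverse_eq)
  then have "-1 - \<xi> powi (- t) \<noteq> 0"
    by (simp add: power_int_minus)
  then have "\<exists>!s. 0 \<le> s \<and> s < N \<and> \<xi> powi s = -1 - \<xi> powi (- t)"
    by (rule ex1_power_int)
  moreover have "\<xi> powi (- t) + y = -1 \<longleftrightarrow> y = -1 - \<xi> powi (- t)" for y
    by (auto simp: algebra_simps)
  ultimately have "\<exists>!s. 0 \<le> s \<and> s < N \<and> \<xi> powi (- t) + \<xi> powi s = -1"
    by presburger
  then have "0 \<le> f_map q \<xi> t \<and> f_map q \<xi> t < N \<and> \<xi> powi (- t) + \<xi> powi (f_map q \<xi> t) = -1"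
    unfolding f_map_def by (rule theI')
  moreover have "\<xi> powi (- t) \<noteq> 0"
    using xi_nonzero by simp
  ultimately show ?thesis
    by (auto simp: mem_resid_dom_iff)
qed

lemma f_map_bij: "bij_betw (f_map q \<xi>) (resid_dom q) (resid_dom q)"
proof (rule bij_betw_imageI)
  show inj: "inj_on (f_map q \<xi>) (resid_dom q)"
  proof
    fix t1 t2
    assume t: "t1 \<in> resid_dom q" "t2 \<in> resid_dom q" and "f_map q \<xi> t1 = f_map q \<xi> t2"
    then have "\<xi> powi (- t1) = \<xi> powi (- t2)"
      using f_map_mem_and_eq[OF t(1)] f_map_mem_and_eq[OF t(2)] by (metis add_right_cancel)
    then have "\<xi> powi t1 = \<xi> powi t2"
      by (simp add: power_int_minus)
    then show "t1 = t2"
      using t power_int_inj by (simp add: resid_dom_def)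
  qed
  have "finite (resid_dom q)"
    by (rule finite_subset[of _ "{0..<N}"]) (auto simp: resid_dom_def)
  moreover have "f_map q \<xi> ` resid_dom q \<subseteq> resid_dom q"
    using f_map_mem_and_eq by blast
  ultimately show "f_map q \<xi> ` resid_dom q = resid_dom q"
    using inj by (rule endo_inj_surj)
qed

lemma frobenius_add: "(x + y :: 'a) ^ q = x ^ q + y ^ q"
proof -
  obtain p k where "prime p" and q: "q = p ^ k"
    using odd_prime_power_q by (auto simp: odd_prime_power_def)
  moreover have "card (UNIV :: 'a set) = p ^ (2 * k)"
    using card_eq q by (simp add: power_mult mult.commute)
  ultimately show ?thesis
    by (intro freshmans_dream') (simp_all add: CHAR_eq_of_card_eq_prime_power)
qed

lemma frobenius_diff: "(x - y :: 'a) ^ q = x ^ q - y ^ q"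
  using frobenius_add[of x "- y"] odd_q by simp

lemma frobenius_fixed_lin_indep:
  fixes u v b :: 'a
  shows "u ^ q = u \<Longrightarrow> v ^ q = v \<Longrightarrow> b ^ q \<noteq> b \<Longrightarrow> u + v * b = 0 \<Longrightarrow> u = 0 \<and> v = 0"
  by (rule additive_power_fixed_lin_indep[OF frobenius_add])

lemma power_int_frobenius_fixed_iff: "(\<xi> powi a) ^ q = \<xi> powi a \<longleftrightarrow> (int q + 1) dvd a"
proof -
  have "(\<xi> powi a) ^ q = \<xi> powi a \<longleftrightarrow> N dvd (int q - 1) * a"
    by (simp add: power_int_mult[symmetric] power_int_eq_iff mod_eq_dvd_iff algebra_simps
        flip: power_int_of_nat)
  also have "\<dots> \<longleftrightarrow> (int q + 1) dvd a"
    using q_ge_3 by (simp add: N_factor mult.commute[of "int q + 1"])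
  finally show ?thesis .
qed

lemma power_int_mod_N: "\<xi> powi (a mod N) = \<xi> powi a"
  by (simp add: power_int_eq_iff)

lemma power_int_mult_q_plus_1_fixed: "(\<xi> powi (t * (int q + 1))) ^ q = \<xi> powi (t * (int q + 1))"
  by (simp add: power_int_frobenius_fixed_iff)

lemma power_int_minus_not_fixed:
  assumes "1 \<le> j" "j \<le> int q"
  shows "(\<xi> powi (- j)) ^ q \<noteq> \<xi> powi (- j)"
  using assms zdvd_not_zless[of j "int q + 1"] by (simp add: power_int_frobenius_fixed_iff)

lemma e_map_arg_mem:
  assumes "1 \<le> j" "j \<le> int q"
  shows "(t * (int q + 1) - j) mod N \<in> resid_dom q"
proof -
  let ?u = "(t * (int q + 1) - j) mod N"
  have "?u mod (int q + 1) = (t * (int q + 1) - j) mod (int q + 1)"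
    by (rule mod_mod_cancel) (simp add: N_factor)
  also have "\<dots> = (- j) mod (int q + 1)"
    by (simp add: mod_diff_left_eq[symmetric])
  also have "\<dots> \<noteq> 0"
    using assms zdvd_not_zless[of j "int q + 1"] by (simp flip: dvd_eq_mod_eq_0)
  finally have "?u \<noteq> qbar q"
    using dvd_qbar by auto
  then show ?thesis
    using N_pos by (simp add: resid_dom_def)
qed

lemma e_map_mem_and_eq:
  assumes "1 \<le> j" "j \<le> int q"
  shows "e_map q \<xi> j t \<in> resid_dom q"
    and "\<xi> powi (- e_map q \<xi> j t) = -1 - \<xi> powi (t * (int q + 1)) * \<xi> powi (- j)"
proof -
  let ?u = "(t * (int q + 1) - j) mod N"
  have inj: "inj_on (f_map q \<xi>) (resid_dom q)"
    using f_map_bij by (simp add: bij_betw_def)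
  have u: "?u \<in> f_map q \<xi> ` resid_dom q"
    using f_map_bij e_map_arg_mem[OF assms] by (simp add: bij_betw_def)
  show e: "e_map q \<xi> j t \<in> resid_dom q"
    unfolding e_map_def by (rule the_inv_into_into[OF inj u]) simp
  have "f_map q \<xi> (e_map q \<xi> j t) = ?u"
    unfolding e_map_def by (rule f_the_inv_into_f[OF inj u])
  then have "\<xi> powi (- e_map q \<xi> j t) + \<xi> powi ?u = -1"
    using f_map_mem_and_eq[OF e] by simp
  moreover have "\<xi> powi ?u = \<xi> powi (t * (int q + 1)) * \<xi> powi (- j)"
    using xi_nonzero by (simp add: power_int_mod_N flip: power_int_add)
  ultimately show "\<xi> powi (- e_map q \<xi> j t) = -1 - \<xi> powi (t * (int q + 1)) * \<xi> powi (- j)"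
    by (simp add: eq_diff_eq)
qed

lemma e_map_mod_inj:
  assumes j: "1 \<le> j" "j \<le> int q"
  shows "inj_on (\<lambda>t. e_map q \<xi> j t mod (int q + 1)) {0 .. int q - 2}"
proof
  fix t1 t2
  assume t: "t1 \<in> {0 .. int q - 2}" "t2 \<in> {0 .. int q - 2}"
    and "e_map q \<xi> j t1 mod (int q + 1) = e_map q \<xi> j t2 mod (int q + 1)"
  define a1 where "a1 = \<xi> powi (t1 * (int q + 1))"
  define a2 where "a2 = \<xi> powi (t2 * (int q + 1))"
  define b where "b = \<xi> powi (- j)"
  define c where "c = \<xi> powi (e_map q \<xi> j t1 - e_map q \<xi> j t2)"
  have "(int q + 1) dvd e_map q \<xi> j t1 - e_map q \<xi> j t2"
    using \<open>_ mod _ = _ mod _\<close> by (simp add: mod_eq_dvd_iff)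
  then have c_fixed: "c ^ q = c"
    by (simp add: c_def power_int_frobenius_fixed_iff)
  have "\<xi> powi (- e_map q \<xi> j t2) = c * \<xi> powi (- e_map q \<xi> j t1)"
    using xi_nonzero by (simp add: c_def flip: power_int_add)
  then have relation: "(c - 1) + (c * a1 - a2) * b = 0"
    using e_map_mem_and_eq(2)[OF j, of t1] e_map_mem_and_eq(2)[OF j, of t2]
    by (simp add: a1_def a2_def b_def algebra_simps)
  have "(c - 1) ^ q = c - 1" and "(c * a1 - a2) ^ q = c * a1 - a2"
    using c_fixed power_int_mult_q_plus_1_fixed
    by (simp_all add: frobenius_diff power_mult_distrib a1_def a2_def)
  then have "c - 1 = 0 \<and> c * a1 - a2 = 0"
    using frobenius_fixed_lin_indep power_int_minus_not_fixed[OF j] relation b_def by blast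
  then have "a1 = a2"
    by (metis eq_iff_diff_eq_0 mult_1)
  then have "\<xi> powi (t1 * (int q + 1)) = \<xi> powi (t2 * (int q + 1))"
    by (simp only: a1_def a2_def)
  then have "(int q + 1) * (int q - 1) dvd (int q + 1) * (t1 - t2)"
    by (simp add: power_int_eq_iff mod_eq_dvd_iff N_factor algebra_simps)
  then have "(int q - 1) dvd t1 - t2"
    using q_ge_3 by (simp only: dvd_mult_cancel_left) simp
  then show "t1 = t2"
    using t dvd_imp_le_int[of "t1 - t2" "int q - 1"] by fastforce
qed

lemma e_map_mod_ne_0:
  assumes j: "1 \<le> j" "j \<le> int q"
  shows "e_map q \<xi> j t mod (int q + 1) \<noteq> 0"
proof
  define a where "a = \<xi> powi (t * (int q + 1))"
  define b where "b = \<xi> powi (- j)"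
  define y where "y = \<xi> powi (- e_map q \<xi> j t)"
  assume "e_map q \<xi> j t mod (int q + 1) = 0"
  then have "(int q + 1) dvd e_map q \<xi> j t"
    by (simp add: dvd_eq_mod_eq_0)
  then have "(1 + y) ^ q = 1 + y"
    by (simp add: y_def frobenius_add power_int_frobenius_fixed_iff)
  moreover have "(1 + y) + a * b = 0"
    using e_map_mem_and_eq(2)[OF j, of t] by (simp add: a_def b_def y_def)
  ultimately have "a = 0"
    using frobenius_fixed_lin_indep power_int_mult_q_plus_1_fixed power_int_minus_not_fixed[OF j]
    unfolding a_def b_def by blast
  then show False
    using xi_nonzero by (simp add: a_def)
qed

lemma e_map_mod_ne_j:
  assumes j: "1 \<le> j" "j \<le> int q"
  shows "e_map q \<xi> j t mod (int q + 1) \<noteq> j mod (int q + 1)"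
proof
  define a where "a = \<xi> powi (t * (int q + 1))"
  define b where "b = \<xi> powi (- j)"
  define c where "c = \<xi> powi (j - e_map q \<xi> j t)"
  assume "e_map q \<xi> j t mod (int q + 1) = j mod (int q + 1)"
  then have "(int q + 1) dvd j - e_map q \<xi> j t"
    by (simp add: mod_eq_dvd_iff dvd_diff_commute)
  then have "c ^ q = c"
    by (simp add: c_def power_int_frobenius_fixed_iff)
  then have "(a + c) ^ q = a + c"
    using power_int_mult_q_plus_1_fixed by (simp add: a_def frobenius_add)
  moreover have "c * b = \<xi> powi (- e_map q \<xi> j t)"
    using xi_nonzero by (simp add: b_def c_def flip: power_int_add)
  then have "1 + (a + c) * b = 0"
    using e_map_mem_and_eq(2)[OF j, of t] by (simp add: a_def b_def algebra_simps)
  moreover have "(1::'a) ^ q = 1"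
    by simp
  ultimately have "(1::'a) = 0"
    using frobenius_fixed_lin_indep power_int_minus_not_fixed[OF j] unfolding b_def by blast
  then show False
    by simp
qed

end

theorem lemma8:
  fixes \<xi> :: "'a::{field,finite}" and q :: nat and j :: int
  assumes "odd_prime_power q"
    and "card (UNIV :: 'a set) = q ^ 2"
    and "primitive_elem \<xi>"
    and "1 \<le> j" and "j \<le> int q"
  shows "bij_betw (f_map q \<xi>) (resid_dom q) (resid_dom q)
    \<and> inj_on (\<lambda>t. e_map q \<xi> j t mod (int q + 1)) {0 .. int q - 2}
    \<and> (\<forall>t \<in> {0 .. int q - 2}.
         e_map q \<xi> j t mod (int q + 1) \<noteq> 0 \<and>
         e_map q \<xi> j t mod (int q + 1) \<noteq> j mod (int q + 1))"
proof -
  interpret primitive_GF_q2 \<xi> q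
    using assms(1-3) by unfold_locales
  show ?thesis
    by (intro conjI ballI f_map_bij e_map_mod_inj e_map_mod_ne_0 e_map_mod_ne_j assms(4,5))
qed

end
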